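(* Assume Schinzel's Hypothesis H. Then $j(a_n)>1$ for infinitely many $n$; equivalently, there are infinitely many $n\ge 2$ such that $a_n-a_{n-1}\notin A$.
   Context: Let $A$ be the set of positive integers $a$ such that $a^2+1$ is prime, and enumerate it in increasing order as $A=\{a_1<a_2<a_3<\cdots\}$ (so $a_1=1,a_2=2,a_3=4,\dots$). For $n\ge 2$, $j(a_n)$ denotes the smallest index $i$ with $1\le i\le n-1$ such that $a_n-a_{n-i}\in A$ (i.e. $a_n-a_{n-i}=a_k$ for some $k$). A finite set of polynomials $f_1,\dots,f_r\in\mathbb{Z}[x]$ satisfies the Bunyakovsky condition if there is no prime $p$ such that $\prod_i f_i(a)\equiv 0 \pmod p$ for all $a\in\mathbb{F}_p$. Schinzel's Hypothesis H: if $f_1,\dots,f_r\in\mathbb{Z}[x]$ are irreducible polynomials with positive leading coefficients satisfying the Bunyakovsky condition, then there are infinitely many positive integers $x$ for which $f_1(x),\dots,f_r(x)$ are all prime. *)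

theory Defs
  imports "HOL-Library.Infinite_Set" "HOL-Computational_Algebra.Polynomial_Factorial"
    "HOL-Computational_Algebra.Primes"
begin

definition setA :: "nat set" where
  "setA = {a. a > 0 \<and> prime (a^2 + 1)}"

text \<open>1-indexed increasing enumeration: a_1 < a_2 < ...\<close>
definition aseq :: "nat \<Rightarrow> nat" where
  "aseq n = enumerate setA (n - 1)"

definition bunyakovsky :: "int poly set \<Rightarrow> bool" where
  "bunyakovsky F \<longleftrightarrow>
     \<not> (\<exists>p::int. prime p \<and> (\<forall>a::int. p dvd (\<Prod>f\<in>F. poly f a)))"

definition hypothesis_H :: bool where
  "hypothesis_H \<longleftrightarrow>
     (\<forall>F::int poly set. finite F \<and> (\<forall>f\<in>F. irreducible f \<and> lead_coeff f > 0) \<and> bunyakovsky F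
        \<longrightarrow> infinite {x::nat. x > 0 \<and> (\<forall>f\<in>F. prime (poly f (int x)))})"

end

theory Submission
  imports Defs
begin

text \<open>
  Hypothesis H, applied to the irreducible quadratics \<open>(130x + 66)\<^sup>2 + 1\<close> and
  \<open>(130x + 74)\<^sup>2 + 1\<close>, puts both \<open>130x + 66\<close> and \<open>130x + 74\<close> into A for
  infinitely many x. No z strictly between them lies in A: for odd z the number
  \<open>z\<^sup>2 + 1\<close> is even, and each even such z is \<open>2\<close> or \<open>3\<close> mod 5 or \<open>5\<close> mod 13, making
  \<open>z\<^sup>2 + 1\<close> divisible by 5 or 13. So these are consecutive elements of A whose
  difference 8 is not in A, because \<open>8\<^sup>2 + 1 = 5 \<cdot> 13\<close>.
\<close>

lemma irreducible_int_quadratic: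
  fixes f0 f1 f2 :: int
  assumes coprime: "coprime f0 f2" and disc: "f1^2 < 4 * f0 * f2"
  shows "irreducible [:f0, f1, f2:]"
proof (rule irreducibleI)
  let ?f = "[:f0, f1, f2:]"
  have "f2 \<noteq> 0" using disc by (cases "f2 = 0") auto
  then have deg: "degree ?f = 2" by simp
  then show "?f \<noteq> 0" by auto
  show "\<not> is_unit ?f" using deg by (auto simp: is_unit_poly_iff)
  have unit_if_const: "is_unit p" if "degree p = 0" "?f = p * q" for p q :: "int poly"
  proof -
    obtain c where c: "p = [:c:]" using \<open>degree p = 0\<close> by (rule degree_eq_zeroE)
    have "coeff ?f 0 = c * coeff q 0" "coeff ?f 2 = c * coeff q 2"
      using \<open>?f = p * q\<close> c by simp_all
    then have "c dvd f0" "c dvd f2" by (simp_all add: numeral_2_eq_2)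
    with coprime have "is_unit c" by (rule coprime_common_divisor)
    then show ?thesis using c by (simp add: is_unit_const_poly_iff)
  qed
  have no_linear_factors: False if "degree p = 1" "degree q = 1" "?f = p * q" for p q :: "int poly"
  proof -
    define c0 c1 d0 d1 where "c0 = coeff p 0" "c1 = coeff p 1" "d0 = coeff q 0" "d1 = coeff q 1"
    have "c1 \<noteq> 0" using \<open>degree p = 1\<close> unfolding c0_c1_d0_d1_def
      by (metis degree_0 leading_coeff_0_iff zero_neq_one)
    have "coeff p 2 = 0" "coeff q 2 = 0" using that by (simp_all add: coeff_eq_0)
    moreover have coeffs: "coeff ?f k = coeff (p * q) k" for k using \<open>?f = p * q\<close> by simp
    ultimately have "f0 = c0 * d0" "f1 = c0 * d1 + c1 * d0" "f2 = c1 * d1"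
      using coeffs[of 0] coeffs[of 1] coeffs[of 2]
      by (simp_all add: coeff_mult numeral_2_eq_2 atMost_Suc c0_c1_d0_d1_def)
    \<comment> \<open>\<open>c1\<^sup>2 f(-c0/c1) = 0\<close>, which the negative discriminant forbids\<close>
    then have "f2 * c0^2 - f1 * c0 * c1 + f0 * c1^2 = 0"
      by (simp add: algebra_simps power2_eq_square)
    moreover have "4 * f2 * (f2 * c0^2 - f1 * c0 * c1 + f0 * c1^2)
        = (2 * f2 * c0 - f1 * c1)^2 + (4 * f0 * f2 - f1^2) * c1^2"
      by (simp add: algebra_simps power2_eq_square)
    ultimately have "(2 * f2 * c0 - f1 * c1)^2 + (4 * f0 * f2 - f1^2) * c1^2 = 0" by simp
    moreover have "(4 * f0 * f2 - f1^2) * c1^2 > 0" using disc \<open>c1 \<noteq> 0\<close> by simp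
    ultimately show False using zero_le_power2[of "2 * f2 * c0 - f1 * c1"] by linarith
  qed
  fix a b assume fab: "?f = a * b"
  then have "a \<noteq> 0" "b \<noteq> 0" using \<open>?f \<noteq> 0\<close> by auto
  then have "degree a + degree b = 2" using fab deg by (simp add: degree_mult_eq)
  then consider "degree a = 0" | "degree b = 0" | "degree a = 1" "degree b = 1" by linarith
  then show "is_unit a \<or> is_unit b"
    by cases (use fab unit_if_const[of a b] unit_if_const[of b a] no_linear_factors in
        \<open>auto simp: mult.commute\<close>)
qed

lemma linear_square_plus_one_poly:
  fixes c d :: "'a::comm_ring_1"
  shows "[:c, d:]^2 + 1 = [:c^2 + 1, 2 * c * d, d^2:]"
  by (simp add: power2_eq_square one_pCons algebra_simps)

lemma irreducible_linear_square_plus_one: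
  fixes c d :: int
  assumes "d \<noteq> 0" and "coprime d (c^2 + 1)"
  shows "irreducible ([:c, d:]^2 + 1)"
proof -
  have "coprime (c^2 + 1) (d^2)" using assms by (simp add: coprime_commute)
  moreover have "(2 * c * d)^2 < 4 * (c^2 + 1) * d^2"
    using \<open>d \<noteq> 0\<close> by (simp add: power_mult_distrib algebra_simps)
  ultimately show ?thesis
    unfolding linear_square_plus_one_poly by (rule irreducible_int_quadratic)
qed

lemma bunyakovskyI:
  assumes "coprime (\<Prod>f\<in>F. poly f a) (\<Prod>f\<in>F. poly f b)"
  shows "bunyakovsky F"
  unfolding bunyakovsky_def
  using assms coprime_common_divisor not_prime_unit by blast

lemma notin_setA_if_dvd:
  fixes d z :: nat
  assumes "d dvd z^2 + 1" and "1 < d" and "d < z"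
  shows "z \<notin> setA"
proof -
  have "z \<le> z^2" by (simp add: power2_eq_square)
  then have "\<not> prime (z^2 + 1)" using assms by (auto simp: prime_nat_iff)
  then show ?thesis by (simp add: setA_def)
qed

lemma dvd_square_plus_one_if_mod:
  fixes d r z :: nat
  assumes "z mod d = r" and "d dvd r^2 + 1"
  shows "d dvd z^2 + 1"
  using assms unfolding dvd_eq_mod_eq_0 by (metis mod_add_left_eq power_mod)

lemma notin_setA_between_66_74_mod_130:
  fixes x z :: nat
  assumes "130 * x + 66 < z" and "z < 130 * x + 74"
  shows "z \<notin> setA"
proof -
  have "z div 130 = x" using assms by (intro div_nat_eqI) simp_all
  then have "z mod 130 \<in> {67..73}" using assms div_mult_mod_eq[of z 130] by auto
  moreover have "\<forall>r\<in>{67..73::nat}. r mod 2 = 1 \<or> r mod 5 = 2 \<or> r mod 5 = 3 \<or> r mod 13 = 5"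
    by (simp add: atLeastAtMost_upt)
  ultimately have "z mod 130 mod 2 = 1 \<or> z mod 130 mod 5 = 2 \<or> z mod 130 mod 5 = 3 \<or>
      z mod 130 mod 13 = 5" by blast
  then have "z mod 2 = 1 \<or> z mod 5 = 2 \<or> z mod 5 = 3 \<or> z mod 13 = 5"
    by (simp add: mod_mod_cancel)
  then have "2 dvd z^2 + 1 \<or> 5 dvd z^2 + 1 \<or> 13 dvd z^2 + 1"
    using dvd_square_plus_one_if_mod[of z 2 1] dvd_square_plus_one_if_mod[of z 5 2]
      dvd_square_plus_one_if_mod[of z 5 3] dvd_square_plus_one_if_mod[of z 13 5] by auto
  then show ?thesis
    using assms notin_setA_if_dvd[of 2 z] notin_setA_if_dvd[of 5 z] notin_setA_if_dvd[of 13 z]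
    by linarith
qed

lemma eight_notin_setA: "(8::nat) \<notin> setA"
  by (rule notin_setA_if_dvd[of 5]) simp_all

lemma enumerate_consecutive:
  fixes S :: "nat set"
  assumes "infinite S" and "a \<in> S" and "b \<in> S" and "a < b" and "\<forall>z\<in>S. \<not> (a < z \<and> z < b)"
  shows "\<exists>k. enumerate S k = a \<and> enumerate S (Suc k) = b"
proof -
  obtain k where k: "enumerate S k = a" using enumerate_Ex assms by blast
  obtain m where m: "enumerate S m = b" using enumerate_Ex assms by blast
  have "enumerate S k < enumerate S m" using assms k m by simp
  then have "k < m" using assms by simp
  then have "enumerate S (Suc k) \<le> b" using assms(1) m by (metis Suc_leI enumerate_mono_le_iff)
  moreover have "a < enumerate S (Suc k)" using assms k enumerate_step by blast
  moreover have "enumerate S (Suc k) \<in> S" using assms enumerate_in_set by blast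
  ultimately have "enumerate S (Suc k) = b" using assms by force
  with k show ?thesis by blast
qed

lemma hypothesis_H_infinite_setA_pairs:
  fixes c1 c2 d :: nat
  assumes "hypothesis_H" and "d > 0"
    and "coprime d (c1^2 + 1)" and "coprime d (c2^2 + 1)"
    and "bunyakovsky {[:int c1, int d:]^2 + 1, [:int c2, int d:]^2 + 1}"
  shows "infinite {x. d * x + c1 \<in> setA \<and> d * x + c2 \<in> setA}"
proof -
  define P where "P c = [:int c, int d:]^2 + 1" for c
  have "irreducible (P c) \<and> lead_coeff (P c) > 0" if "coprime d (c^2 + 1)" for c
  proof -
    have "coprime (int d) ((int c)^2 + 1)"
      using that by (metis coprime_int_iff of_nat_1 of_nat_add of_nat_power)
    then show ?thesis using \<open>d > 0\<close> irreducible_linear_square_plus_one[of "int d" "int c"]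
      by (simp add: P_def linear_square_plus_one_poly)
  qed
  moreover have "bunyakovsky {P c1, P c2}" using assms(5) by (simp add: P_def)
  ultimately have "infinite {x. x > 0 \<and> (\<forall>f\<in>{P c1, P c2}. prime (poly f (int x)))}"
    using assms(1,3,4) unfolding hypothesis_H_def by (auto dest!: spec[of _ "{P c1, P c2}"])
  moreover have "prime (poly (P c) (int x)) \<longleftrightarrow> prime ((d * x + c)^2 + 1)" for c x
  proof -
    have "poly (P c) (int x) = int ((d * x + c)^2 + 1)" by (simp add: P_def ac_simps)
    then show ?thesis by (simp only: prime_nat_int_transfer)
  qed
  then have "{x. x > 0 \<and> (\<forall>f\<in>{P c1, P c2}. prime (poly f (int x)))}
      \<subseteq> {x. d * x + c1 \<in> setA \<and> d * x + c2 \<in> setA}"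
    using \<open>d > 0\<close> by (auto simp: setA_def)
  ultimately show ?thesis by (rule infinite_super[rotated])
qed

theorem proposition1:
  assumes "hypothesis_H"
  shows "infinite {n::nat. n \<ge> 2 \<and> aseq n - aseq (n - 1) \<notin> setA}"
proof -
  let ?X = "{x. 130 * x + 66 \<in> setA \<and> 130 * x + 74 \<in> setA}"
  let ?T = "{n::nat. n \<ge> 2 \<and> aseq n - aseq (n - 1) \<notin> setA}"
  have coprime: "coprime (130::nat) (66^2 + 1)" "coprime (130::nat) (74^2 + 1)"
    by (simp_all add: coprime_iff_gcd_eq_1 gcd_nat.simps)
  have bunyakovsky: "bunyakovsky {[:int 66, int 130:]^2 + 1, [:int 74, int 130:]^2 + 1}"
    by (rule bunyakovskyI[where a = 0 and b = 1]) (simp add: power2_eq_square; code_simp)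
  have "infinite ?X"
    by (rule hypothesis_H_infinite_setA_pairs[OF assms _ coprime bunyakovsky]) simp
  moreover have "inj_on (\<lambda>x. 130 * x + 74) ?X" by (rule inj_onI) simp
  ultimately have image_infinite: "infinite ((\<lambda>x. 130 * x + 74) ` ?X)"
    by (simp add: finite_image_iff)
  moreover have "(\<lambda>x. 130 * x + 74) ` ?X \<subseteq> setA" by auto
  ultimately have "infinite setA" by (rule infinite_super[rotated])
  have "(\<lambda>x. 130 * x + 74) ` ?X \<subseteq> aseq ` ?T"
  proof (rule image_subsetI)
    fix x assume "x \<in> ?X"
    moreover have "\<forall>z\<in>setA. \<not> (130 * x + 66 < z \<and> z < 130 * x + 74)"
      using notin_setA_between_66_74_mod_130 by blast
    ultimately obtain k where
      "enumerate setA k = 130 * x + 66" "enumerate setA (Suc k) = 130 * x + 74"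
      using enumerate_consecutive[OF \<open>infinite setA\<close>, of "130 * x + 66" "130 * x + 74"] by auto
    then have "aseq (k + 2) = 130 * x + 74" and "aseq (k + 1) = 130 * x + 66"
      by (simp_all add: aseq_def)
    then have "k + 2 \<in> ?T" using eight_notin_setA by simp
    with \<open>aseq (k + 2) = 130 * x + 74\<close> show "130 * x + 74 \<in> aseq ` ?T"
      by (rule image_eqI[OF sym])
  qed
  then have "infinite (aseq ` ?T)" using image_infinite by (rule infinite_super)
  then show ?thesis using finite_imageI by blast
qed

end
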